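(* Let $X$ be a smooth, pointed, oriented, closed, connected manifold, $\Xi$ a set of DG Morse data on $X$ with Morse function $f$ and twisting cocycle $\{m_{x,y}\}$, and let $\boldsymbol{\varphi}=\{\varphi_n\}_{n\ge1}:(\mathcal{A},\nu^{\mathcal{A}})\to(\mathcal{B},\nu^{\mathcal{B}})$ be a morphism of $\mathcal{A}_\infty$-modules over $C_*(\Omega X)$. Then the map $\tilde\varphi:C_*(X,\Xi,\mathcal{A})\to C_*(X,\Xi,\mathcal{B})$ defined by $$\tilde\varphi=\sum_{n\ge0}(\varphi_{n+1}\otimes1)\tilde{\mathbf m}^n$$ is a morphism of complexes.
   Context: $C_*(\Omega X)$ (normalized cubical chains on Moore based loops) is viewed as an $\mathcal{A}_\infty$-algebra with $\mu_1$ the differential, $\mu_2$ the Pontryagin product and $\mu_i=0$ for $i\ge3$. All functional expressions obey the Koszul sign rule $(f\otimes g)(x\otimes y)=(-1)^{|g||x|}f(x)\otimes g(y)$. An $\mathcal{A}_\infty$-module over $C_*(\Omega X)$ is a graded $\mathbb{Z}$-module $\mathcal{A}$ with maps $\nu_n:\mathcal{A}\otimes C_*(\Omega X)^{\otimes n-1}\to\mathcal{A}$ of degree $n-2$ ($\nu_1$ the differential) such that for all $N\ge1$: $\sum_{s+t=N,s\ge1}(-1)^{st}\nu_{t+1}(\nu_s\otimes1^{\otimes t})+\sum_{r+s+t=N,\,r,s\ge1}(-1)^{r+st}\nu_{r+t+1}(1^{\otimes r}\otimes\mu_s\otimes1^{\otimes t})=0$. A morphism $\boldsymbol\varphi:(\mathcal{A},\nu^A)\to(\mathcal{B},\nu^B)$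 is a family of maps $\varphi_n:\mathcal{A}\otimes C_*(\Omega X)^{\otimes n-1}\to\mathcal{B}$ of degree $n-1$ with, for all $N\ge1$, $\sum_{s+t=N}(-1)^{st}\varphi_{t+1}(\nu^A_s\otimes1^{\otimes t})+\sum_{r+s+t=N,r\ge1}(-1)^{r+st}\varphi_{r+t+1}(1^{\otimes r}\otimes\mu_s\otimes1^{\otimes t})=\sum_{s+t=N}(-1)^{(s+1)t}\nu^B_{t+1}(\varphi_s\otimes1^{\otimes t})$. Twisted complexes: given a twisting cocycle $m_{x,y}\in C_{|x|-|y|-1}(\Omega X)$ ($x,y\in\mathrm{Crit}(f)$, $\partial m_{x,y}=\sum_z(-1)^{|x|-|z|}m_{x,z}m_{z,y}$), set $\mathbf m(x)=\sum_y m_{x,y}\otimes y$ and extend to $\tilde{\mathbf m}$ of degree $-1$ on $\mathcal{A}\otimes TC_*(\Omega X)\otimes\mathbb{Z}\mathrm{Crit}(f)$ by $\tilde{\mathbf m}(\alpha\otimes\gamma_1\otimes\dots\otimes\gamma_k\otimes x)=(1^{\otimes k+1}\otimes\mathbf m)(\alpha\otimes\gamma_1\otimes\dots\otimes\gamma_k\otimes x)$. The complex $C_*(X,\Xi,\mathcal{A})=\mathcal{A}\otimes\mathbb{Z}\mathrm{Crit}(f)$ has differential $\partial=\sum_{n\ge0}(\nu_{n+1}\otimes1)\tilde{\mathbf m}^n$, where $m_{x,y}$ is the Barraud–Cornea twisting cocycle of the DG Morse data $\Xi$ (Morse–Smale pair, orientations, representing chain system of moduli spaces of broken trajectories, tree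 rooted at the basepoint with vertices the critical points, homotopy inverse of the tree collapse). *)

theory Defs
  imports Main
begin

text \<open>Graded abelian groups are
  modelled as an ambient abelian group with a family of homogeneous components indexed
  by the degree (an internal direct sum).  Elements of tensor products are handled on
  homogeneous elementary tensors, which generate; all structure maps are multilinear.\<close>

definition ks :: "int \<Rightarrow> 'a::ab_group_add \<Rightarrow> 'a" where
  "ks e x = (if even e then x else - x)"

definition fsum :: "(nat \<Rightarrow> 'a::ab_group_add) \<Rightarrow> 'a" where
  "fsum f = sum f {n. f n \<noteq> 0}"

definition graded :: "(int \<Rightarrow> 'a::ab_group_add set) \<Rightarrow> bool" where
  "graded G \<longleftrightarrow>
     (\<forall>d. 0 \<in> G d \<and> (\<forall>x\<in>G d. \<forall>y\<in>G d. x + y \<in> G d \<and> - x \<in> G d))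
   \<and> (\<forall>x. \<exists>f. finite {d. f d \<noteq> 0} \<and> (\<forall>d. f d \<in> G d) \<and> x = sum f {d. f d \<noteq> 0})
   \<and> (\<forall>f. finite {d. f d \<noteq> 0} \<and> (\<forall>d. f d \<in> G d) \<and> sum f {d. f d \<noteq> 0} = 0
          \<longrightarrow> (\<forall>d. f d = 0))"

definition hom_list :: "(int \<Rightarrow> 'c set) \<Rightarrow> 'c list \<Rightarrow> int list \<Rightarrow> bool" where
  "hom_list G gs ds \<longleftrightarrow> length gs = length ds \<and> (\<forall>i<length gs. gs ! i \<in> G (ds ! i))"

text \<open>DG algebra (the A-infinity algebra C_*(Omega X) with mu_1 = differential,
  mu_2 = product, mu_i = 0 for i \<ge> 3), nonnegatively graded like chains.\<close>
definition dga :: "(int \<Rightarrow> 'c::ab_group_add set) \<Rightarrow> ('c \<Rightarrow> 'c) \<Rightarrow> ('c \<Rightarrow> 'c \<Rightarrow> 'c) \<Rightarrow> bool" where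
  "dga GC mu1 mu2 \<longleftrightarrow> graded GC \<and> (\<forall>d<0. GC d = {0})
   \<and> (\<forall>d x. x \<in> GC d \<longrightarrow> mu1 x \<in> GC (d - 1))
   \<and> (\<forall>d e x y. x \<in> GC d \<longrightarrow> y \<in> GC e \<longrightarrow> mu2 x y \<in> GC (d + e))
   \<and> (\<forall>x y. mu1 (x + y) = mu1 x + mu1 y)
   \<and> (\<forall>x y z. mu2 (x + y) z = mu2 x z + mu2 y z \<and> mu2 z (x + y) = mu2 z x + mu2 z y)
   \<and> (\<forall>x. mu1 (mu1 x) = 0)
   \<and> (\<forall>d x y. x \<in> GC d \<longrightarrow> mu1 (mu2 x y) = mu2 (mu1 x) y + ks d (mu2 x (mu1 y)))
   \<and> (\<forall>x y z. mu2 (mu2 x y) z = mu2 x (mu2 y z))"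

definition mu :: "('c \<Rightarrow> 'c) \<Rightarrow> ('c \<Rightarrow> 'c \<Rightarrow> 'c) \<Rightarrow> nat \<Rightarrow> 'c list \<Rightarrow> 'c::ab_group_add" where
  "mu mu1 mu2 s gs = (if s = 1 then mu1 (gs ! 0) else if s = 2 then mu2 (gs ! 0) (gs ! 1) else 0)"

text \<open>(1^{r} \<otimes> mu_s \<otimes> 1^{t}) on alpha \<otimes> gs, without sign: the first r factors are
  alpha and the first r-1 elements of gs.\<close>
definition replace_mu :: "('c \<Rightarrow> 'c) \<Rightarrow> ('c \<Rightarrow> 'c \<Rightarrow> 'c) \<Rightarrow> nat \<Rightarrow> nat \<Rightarrow> 'c list \<Rightarrow> 'c::ab_group_add list" where
  "replace_mu mu1 mu2 r s gs =
     take (r - 1) gs @ [mu mu1 mu2 s (take s (drop (r - 1) gs))] @ drop (r - 1 + s) gs"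

definition ainf_module ::
  "(int \<Rightarrow> 'c::ab_group_add set) \<Rightarrow> ('c \<Rightarrow> 'c) \<Rightarrow> ('c \<Rightarrow> 'c \<Rightarrow> 'c)
   \<Rightarrow> (int \<Rightarrow> 'a::ab_group_add set) \<Rightarrow> (nat \<Rightarrow> 'a \<Rightarrow> 'c list \<Rightarrow> 'a) \<Rightarrow> bool" where
  "ainf_module GC mu1 mu2 GA nu \<longleftrightarrow> graded GA
   \<and> (\<forall>n\<ge>1. \<forall>a d gs ds. a \<in> GA d \<longrightarrow> hom_list GC gs ds \<longrightarrow> length gs = n - 1 \<longrightarrow>
        nu n a gs \<in> GA (d + sum_list ds + int n - 2))
   \<and> (\<forall>n\<ge>1. \<forall>a b gs. length gs = n - 1 \<longrightarrow> nu n (a + b) gs = nu n a gs + nu n b gs)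
   \<and> (\<forall>n\<ge>1. \<forall>a gs i g h. length gs = n - 1 \<longrightarrow> i < length gs \<longrightarrow>
        nu n a (gs[i := g + h]) = nu n a (gs[i := g]) + nu n a (gs[i := h]))
   \<and> (\<forall>N\<ge>1. \<forall>a d gs ds. a \<in> GA d \<longrightarrow> hom_list GC gs ds \<longrightarrow> length gs = N - 1 \<longrightarrow>
        (\<Sum>s\<in>{1..N}. ks (int (s * (N - s)))
            (nu (N - s + 1) (nu s a (take (s - 1) gs)) (drop (s - 1) gs)))
      + (\<Sum>r\<in>{1..N}. \<Sum>s\<in>{1..N - r}. ks (int (r + s * (N - r - s)))
            (ks ((int s - 2) * (d + sum_list (take (r - 1) ds)))
               (nu (N - s + 1) a (replace_mu mu1 mu2 r s gs)))) = 0)"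

definition ainf_morphism ::
  "(int \<Rightarrow> 'c::ab_group_add set) \<Rightarrow> ('c \<Rightarrow> 'c) \<Rightarrow> ('c \<Rightarrow> 'c \<Rightarrow> 'c)
   \<Rightarrow> (int \<Rightarrow> 'a::ab_group_add set) \<Rightarrow> (nat \<Rightarrow> 'a \<Rightarrow> 'c list \<Rightarrow> 'a)
   \<Rightarrow> (int \<Rightarrow> 'b::ab_group_add set) \<Rightarrow> (nat \<Rightarrow> 'b \<Rightarrow> 'c list \<Rightarrow> 'b)
   \<Rightarrow> (nat \<Rightarrow> 'a \<Rightarrow> 'c list \<Rightarrow> 'b) \<Rightarrow> bool" where
  "ainf_morphism GC mu1 mu2 GA nuA GB nuB phi \<longleftrightarrow>
     (\<forall>n\<ge>1. \<forall>a d gs ds. a \<in> GA d \<longrightarrow> hom_list GC gs ds \<longrightarrow> length gs = n - 1 \<longrightarrow>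
        phi n a gs \<in> GB (d + sum_list ds + int n - 1))
   \<and> (\<forall>n\<ge>1. \<forall>a b gs. length gs = n - 1 \<longrightarrow> phi n (a + b) gs = phi n a gs + phi n b gs)
   \<and> (\<forall>n\<ge>1. \<forall>a gs i g h. length gs = n - 1 \<longrightarrow> i < length gs \<longrightarrow>
        phi n a (gs[i := g + h]) = phi n a (gs[i := g]) + phi n a (gs[i := h]))
   \<and> (\<forall>N\<ge>1. \<forall>a d gs ds. a \<in> GA d \<longrightarrow> hom_list GC gs ds \<longrightarrow> length gs = N - 1 \<longrightarrow>
        (\<Sum>s\<in>{1..N}. ks (int (s * (N - s)))
            (phi (N - s + 1) (nuA s a (take (s - 1) gs)) (drop (s - 1) gs)))
      + (\<Sum>r\<in>{1..N}. \<Sum>s\<in>{1..N - r}. ks (int (r + s * (N - r - s)))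
            (ks ((int s - 2) * (d + sum_list (take (r - 1) ds)))
               (phi (N - s + 1) a (replace_mu mu1 mu2 r s gs))))
      = (\<Sum>s\<in>{1..N}. ks (int ((s + 1) * (N - s)))
            (nuB (N - s + 1) (phi s a (take (s - 1) gs)) (drop (s - 1) gs))))"

definition twisting_cocycle ::
  "(int \<Rightarrow> 'c::ab_group_add set) \<Rightarrow> ('c \<Rightarrow> 'c) \<Rightarrow> ('c \<Rightarrow> 'c \<Rightarrow> 'c)
   \<Rightarrow> 'x list \<Rightarrow> ('x \<Rightarrow> int) \<Rightarrow> ('x \<Rightarrow> 'x \<Rightarrow> 'c) \<Rightarrow> bool" where
  "twisting_cocycle GC mu1 mu2 crit ind m \<longleftrightarrow> distinct crit
   \<and> (\<forall>x\<in>set crit. \<forall>y\<in>set crit. m x y \<in> GC (ind x - ind y - 1))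
   \<and> (\<forall>x\<in>set crit. \<forall>y\<in>set crit.
        mu1 (m x y) = (\<Sum>z\<leftarrow>crit. ks (ind x - ind z) (mu2 (m x z) (m z y))))"

text \<open>Elementary tensors alpha \<otimes> g_1 \<otimes> ... \<otimes> g_k \<otimes> x, recorded as
  (e, alpha, [g_1..g_k], x) with e = |alpha| + sum |g_i|; formal sums are lists.
  One application of m-tilde: (1^{k+1} \<otimes> m), with Koszul sign (-1)^{|m| e}, |m| = -1.\<close>
definition mt_step :: "'x list \<Rightarrow> ('x \<Rightarrow> int) \<Rightarrow> ('x \<Rightarrow> 'x \<Rightarrow> 'c)
    \<Rightarrow> int \<times> 'a::ab_group_add \<times> 'c list \<times> 'x \<Rightarrow> (int \<times> 'a \<times> 'c list \<times> 'x) list" where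
  "mt_step crit ind m = (\<lambda>(e, a, gs, x).
     map (\<lambda>y. (e + ind x - ind y - 1, ks e a, gs @ [m x y], y)) crit)"

definition mt_pow :: "'x list \<Rightarrow> ('x \<Rightarrow> int) \<Rightarrow> ('x \<Rightarrow> 'x \<Rightarrow> 'c) \<Rightarrow> nat
    \<Rightarrow> (int \<times> 'a::ab_group_add \<times> 'c list \<times> 'x) list \<Rightarrow> (int \<times> 'a \<times> 'c list \<times> 'x) list" where
  "mt_pow crit ind m n = ((\<lambda>L. concat (map (mt_step crit ind m) L)) ^^ n)"

text \<open>An element of A \<otimes> Z Crit homogeneous of total degree d is c : 'x => 'a with
  c x \<in> A_{d - |x|}, standing for sum_x c x \<otimes> x.\<close>
definition start_list :: "'x list \<Rightarrow> ('x \<Rightarrow> int) \<Rightarrow> int \<Rightarrow> ('x \<Rightarrow> 'a)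
    \<Rightarrow> (int \<times> 'a \<times> 'c list \<times> 'x) list" where
  "start_list crit ind d c = map (\<lambda>x. (d - ind x, c x, [], x)) crit"

text \<open>sum_{n \<ge> 0} (F_{n+1} \<otimes> 1) m-tilde^n, applied to a degree d element c.
  With F = nu this is the twisted differential, with F = phi it is phi-tilde.\<close>
definition twisted :: "(nat \<Rightarrow> 'a \<Rightarrow> 'c list \<Rightarrow> 'b::ab_group_add) \<Rightarrow> 'x list \<Rightarrow> ('x \<Rightarrow> int)
    \<Rightarrow> ('x \<Rightarrow> 'x \<Rightarrow> 'c) \<Rightarrow> int \<Rightarrow> ('x \<Rightarrow> 'a::ab_group_add) \<Rightarrow> ('x \<Rightarrow> 'b)" where
  "twisted F crit ind m d c = (\<lambda>z. fsum (\<lambda>n.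
     sum_list (map (\<lambda>(e, a, gs, x). if x = z then F (n + 1) a gs else 0)
       (mt_pow crit ind m n (start_list crit ind d c)))))"

end

theory Submission
  imports Defs "HOL.Modules"
begin

text \<open>Expanding \<open>m\<close>-tilde\<open>\<^sup>n\<close>, both composites become sums over paths \<open>x\<^sub>0 \<dots> x\<^sub>n\<close> of critical
  points whose edge labels \<open>m x\<^sub>i x\<^sub>i\<^sub>+\<^sub>1\<close> fill the algebra slots; the label degrees force a
  zero label on every path longer than the number of Morse indices, so the sums are finite.
  Along each path the \<open>A\<^sub>\<infinity>\<close>-morphism equation identifies the two composites up to the terms
  in which \<open>\<mu>\<^sub>1\<close> hits one label or \<open>\<mu>\<^sub>2\<close> multiplies two adjacent ones.  The cocycle
  equation writes \<open>\<mu>\<^sub>1 m\<^bsub>x y\<^esub>\<close> as a signed sum over vertices \<open>w\<close> of \<open>m\<^bsub>x w\<^esub> m\<^bsub>w y\<^esub>\<close>, and each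
  such term cancels the \<open>\<mu>\<^sub>2\<close>-term of the path with \<open>w\<close> inserted.\<close>

lemma ks_ks [simp]: "ks a (ks b x) = ks (a + b) x"
  by (auto simp: ks_def)

lemma ks_exp_0 [simp]: "ks 0 x = x"
  by (simp add: ks_def)

lemma ks_cong_even: "even (a - b) \<Longrightarrow> ks a x = ks b x"
  unfolding ks_def by (simp add: even_diff_iff)

lemma ks_cong_odd: "odd (a - b) \<Longrightarrow> ks a x = - ks b x"
  unfolding ks_def by (auto simp: even_diff_iff)

lemma additive_ks: "additive (ks e)"
  by unfold_locales (simp add: ks_def)

lemmas ks_zero [simp] = additive.zero[OF additive_ks]
  and ks_add = additive.add[OF additive_ks]
  and ks_sum = additive.sum[OF additive_ks]

lemma (in additive) ks: "f (ks e x) = ks e (f x)"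
  by (simp add: ks_def minus)

locale multilinear_op =
  fixes F :: "nat \<Rightarrow> 'a::ab_group_add \<Rightarrow> 'c::ab_group_add list \<Rightarrow> 'b::ab_group_add"
  assumes additive_arg: "length gs = k \<Longrightarrow> additive (\<lambda>a. F (Suc k) a gs)"
    and additive_slot: "length gs = k \<Longrightarrow> i < k \<Longrightarrow> additive (\<lambda>g. F (Suc k) a (gs[i := g]))"
begin

lemma arg_ks: "length gs = k \<Longrightarrow> F (Suc k) (ks e a) gs = ks e (F (Suc k) a gs)"
  by (rule additive.ks[OF additive_arg])

lemma arg_sum: "length gs = k \<Longrightarrow> F (Suc k) (sum f S) gs = (\<Sum>i\<in>S. F (Suc k) (f i) gs)"
  by (rule additive.sum[OF additive_arg])

lemma arg_zero: "length gs = k \<Longrightarrow> F (Suc k) 0 gs = 0"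
  by (rule additive.zero[OF additive_arg])

lemma slot_ks: "length gs = k \<Longrightarrow> i < k \<Longrightarrow>
    F (Suc k) a (gs[i := ks e g]) = ks e (F (Suc k) a (gs[i := g]))"
  by (rule additive.ks[OF additive_slot])

lemma slot_sum: "length gs = k \<Longrightarrow> i < k \<Longrightarrow>
    F (Suc k) a (gs[i := sum f S]) = (\<Sum>j\<in>S. F (Suc k) a (gs[i := f j]))"
  by (rule additive.sum[OF additive_slot])

lemma zero_slot: "length gs = k \<Longrightarrow> 0 \<in> set gs \<Longrightarrow> F (Suc k) a gs = 0"
  by (metis additive.zero[OF additive_slot] in_set_conv_nth list_update_id)

end

lemma multilinear_opI:
  fixes F :: "nat \<Rightarrow> 'a::ab_group_add \<Rightarrow> 'c::ab_group_add list \<Rightarrow> 'b::ab_group_add"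
  assumes "\<forall>n\<ge>1. \<forall>a b gs. length gs = n - 1 \<longrightarrow> F n (a + b) gs = F n a gs + F n b gs"
    and "\<forall>n\<ge>1. \<forall>a gs i g h. length gs = n - 1 \<longrightarrow> i < length gs \<longrightarrow>
           F n a (gs[i := g + h]) = F n a (gs[i := g]) + F n a (gs[i := h])"
  shows "multilinear_op F"
proof (intro multilinear_op.intro)
  show "additive (\<lambda>a. F (Suc k) a gs)" if "length gs = k" for gs :: "'c list" and k
    using assms(1) that by (simp add: additive_def)
  show "additive (\<lambda>g. F (Suc k) a (gs[i := g]))" if "length gs = k" "i < k" for gs :: "'c list" and k i a
    using assms(2) that by (simp add: additive_def)
qed

lemma ainf_module_multilinear: "ainf_module GC mu1 mu2 GA nu \<Longrightarrow> multilinear_op nu"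
  unfolding ainf_module_def by (rule multilinear_opI) blast+

lemma ainf_morphism_multilinear: "ainf_morphism GC mu1 mu2 GA nuA GB nuB phi \<Longrightarrow> multilinear_op phi"
  unfolding ainf_morphism_def by (rule multilinear_opI) blast+

definition crit_paths :: "'x list \<Rightarrow> nat \<Rightarrow> 'x \<Rightarrow> 'x list set" where
  "crit_paths crit n z = {p. length p = Suc n \<and> set p \<subseteq> set crit \<and> last p = z}"

lemma finite_crit_paths: "finite (crit_paths crit n z)"
proof (rule finite_subset)
  show "crit_paths crit n z \<subseteq> {p. set p \<subseteq> set crit \<and> length p = Suc n}"
    unfolding crit_paths_def by auto
qed (rule finite_lists_length_eq, simp)

lemma crit_paths_nth_mem:
  "p \<in> crit_paths crit n z \<Longrightarrow> j \<le> n \<Longrightarrow> p ! j \<in> set crit"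
  unfolding crit_paths_def by (auto intro: nth_mem)

fun edge_labels :: "('x \<Rightarrow> 'x \<Rightarrow> 'c) \<Rightarrow> 'x list \<Rightarrow> 'c list" where
  "edge_labels m (x # y # ys) = m x y # edge_labels m (y # ys)"
| "edge_labels m _ = []"

lemma length_edge_labels [simp]: "length (edge_labels m p) = length p - 1"
  by (induction m p rule: edge_labels.induct) auto

lemma nth_edge_labels: "j < length p - 1 \<Longrightarrow> edge_labels m p ! j = m (p ! j) (p ! Suc j)"
  by (induction m p arbitrary: j rule: edge_labels.induct) (auto simp: nth_Cons split: nat.splits)

lemma edge_labels_Cons: "ys \<noteq> [] \<Longrightarrow> edge_labels m (x # ys) = m x (hd ys) # edge_labels m ys"
  by (cases ys) auto

lemma edge_labels_append:
  "xs \<noteq> [] \<Longrightarrow> ys \<noteq> [] \<Longrightarrow>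
    edge_labels m (xs @ ys) = edge_labels m xs @ m (last xs) (hd ys) # edge_labels m ys"
  by (induction xs) (auto simp: edge_labels_Cons)

lemma edge_labels_snoc: "p \<noteq> [] \<Longrightarrow> edge_labels m (p @ [y]) = edge_labels m p @ [m (last p) y]"
  using edge_labels_append[of p "[y]" m] by simp

lemma edge_labels_drop: "edge_labels m (drop q p) = drop q (edge_labels m p)"
  by (rule nth_equalityI) (auto simp: nth_edge_labels)

lemma edge_labels_take: "q < length p \<Longrightarrow> edge_labels m (take (Suc q) p) = take q (edge_labels m p)"
  by (rule nth_equalityI) (auto simp: nth_edge_labels)

lemma sum_take_edge_degrees:
  "j < length p \<Longrightarrow>
    sum_list (take j (edge_labels (\<lambda>x y. ind x - ind y - 1) p)) = ind (hd p) - ind (p ! j) - int j"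
  by (induction "\<lambda>x y. ind x - ind y - 1 :: int" p arbitrary: j rule: edge_labels.induct)
    (auto simp: nth_Cons split: nat.splits)

text \<open>Each application of \<open>m\<close>-tilde (\<open>mt_step\<close>) multiplies the coefficient by \<open>(-1)\<^sup>e\<close>, where
  \<open>e\<close> is the total degree of the elementary tensor; before the \<open>i\<close>-th step along a path
  \<open>x\<^sub>0 \<dots> x\<^sub>n\<close> starting in degree \<open>d\<close> this is \<open>d - i - ind x\<^sub>i\<close>.\<close>
fun vertex_signs :: "('x \<Rightarrow> int) \<Rightarrow> int \<Rightarrow> 'x list \<Rightarrow> int" where
  "vertex_signs ind d [] = 0"
| "vertex_signs ind d (x # xs) = (d - ind x) + vertex_signs ind (d - 1) xs"

definition path_sign :: "('x \<Rightarrow> int) \<Rightarrow> int \<Rightarrow> 'x list \<Rightarrow> int" where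
  "path_sign ind d p = vertex_signs ind d (butlast p)"

lemma vertex_signs_append:
  "vertex_signs ind d (xs @ ys) = vertex_signs ind d xs + vertex_signs ind (d - int (length xs)) ys"
  by (induction xs arbitrary: d) (auto simp: algebra_simps)

lemma vertex_signs_shift: "vertex_signs ind (d + t) xs = vertex_signs ind d xs + t * int (length xs)"
proof (induction xs arbitrary: d)
  case (Cons x xs)
  have "d + t - 1 = d - 1 + t" by simp
  then show ?case using Cons.IH[of "d - 1"] by (simp add: algebra_simps)
qed simp

lemma path_sign_snoc:
  "length p = Suc n \<Longrightarrow> path_sign ind d (p @ [y]) = path_sign ind d p + (d - int n - ind (last p))"
  by (cases p rule: rev_cases) (auto simp: path_sign_def vertex_signs_append butlast_append)

fun path_list :: "'x list \<Rightarrow> nat \<Rightarrow> 'x list list" where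
  "path_list crit 0 = map (\<lambda>x. [x]) crit"
| "path_list crit (Suc n) = concat (map (\<lambda>p. map (\<lambda>y. p @ [y]) crit) (path_list crit n))"

lemma set_path_list: "set (path_list crit n) = {p. length p = Suc n \<and> set p \<subseteq> set crit}"
proof (induction n)
  case 0
  have "p \<in> (\<lambda>x. [x]) ` set crit" if "length p = Suc 0" "set p \<subseteq> set crit" for p
    using that by (cases p) auto
  then show ?case by auto
next
  case (Suc n)
  show ?case
  proof (intro set_eqI iffI)
    fix p assume "p \<in> set (path_list crit (Suc n))"
    then obtain q y where "q \<in> set (path_list crit n)" "y \<in> set crit" "p = q @ [y]"
      by auto
    then show "p \<in> {p. length p = Suc (Suc n) \<and> set p \<subseteq> set crit}"
      using Suc.IH by simp
  next
    fix p assume p: "p \<in> {p. length p = Suc (Suc n) \<and> set p \<subseteq> set crit}"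
    then have "p \<noteq> []" by auto
    have "butlast p \<in> set (path_list crit n)"
      using Suc.IH p by (auto dest: in_set_butlastD)
    moreover have "last p \<in> set crit" using \<open>p \<noteq> []\<close> p by auto
    ultimately have "butlast p @ [last p] \<in> set (path_list crit (Suc n))"
      by auto
    with \<open>p \<noteq> []\<close> show "p \<in> set (path_list crit (Suc n))" by simp
  qed
qed

lemma distinct_path_list: "distinct crit \<Longrightarrow> distinct (path_list crit n)"
proof (induction n)
  case 0
  then show ?case by (simp add: distinct_map inj_on_def)
next
  case (Suc n)
  have "path_list crit (Suc n) = map (\<lambda>(p, y). p @ [y]) (List.product (path_list crit n) crit)"
    by (simp add: product_concat_map map_concat comp_def)
  moreover have "inj_on (\<lambda>(p, y). p @ [y]) (set (List.product (path_list crit n) crit))"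
    by (auto simp: inj_on_def)
  ultimately show ?case using Suc by (simp add: distinct_map distinct_product)
qed

lemma mt_pow_start_list:
  "mt_pow crit ind m n (start_list crit ind d c) =
    map (\<lambda>p. (d - ind (last p) - int n, ks (path_sign ind d p) (c (hd p)), edge_labels m p, last p))
      (path_list crit n)"
proof (induction n)
  case 0
  show ?case by (simp add: mt_pow_def start_list_def path_sign_def)
next
  case (Suc n)
  let ?term = "\<lambda>n p. (d - ind (last p) - int n, ks (path_sign ind d p) (c (hd p)), edge_labels m p, last p)"
  have "mt_step crit ind m (?term n p) = map (\<lambda>y. ?term (Suc n) (p @ [y])) crit"
    if "p \<in> set (path_list crit n)" for p
  proof -
    have p: "length p = Suc n" using that by (simp add: set_path_list)
    then have "p \<noteq> []" by auto
    with p show ?thesis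
      unfolding mt_step_def by (auto simp: path_sign_snoc edge_labels_snoc hd_append2 algebra_simps)
  qed
  then show ?case
    by (simp add: mt_pow_def Suc.IH[unfolded mt_pow_def] map_concat comp_def cong: map_cong)
qed

definition path_sum :: "(nat \<Rightarrow> 'a \<Rightarrow> 'c list \<Rightarrow> 'b::ab_group_add) \<Rightarrow> 'x list \<Rightarrow> ('x \<Rightarrow> int)
    \<Rightarrow> ('x \<Rightarrow> 'x \<Rightarrow> 'c) \<Rightarrow> int \<Rightarrow> ('x \<Rightarrow> 'a::ab_group_add) \<Rightarrow> 'x \<Rightarrow> nat \<Rightarrow> 'b" where
  "path_sum F crit ind m d c z n =
    (\<Sum>p\<in>crit_paths crit n z. F (Suc n) (ks (path_sign ind d p) (c (hd p))) (edge_labels m p))"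

lemma twisted_eq_fsum_path_sum:
  assumes "distinct crit"
  shows "twisted F crit ind m d c z = fsum (path_sum F crit ind m d c z)"
proof -
  have "sum_list (map (\<lambda>(e, a, gs, x). if x = z then F (n + 1) a gs else 0)
      (mt_pow crit ind m n (start_list crit ind d c))) = path_sum F crit ind m d c z n" for n
  proof -
    let ?h = "\<lambda>p. if last p = z then F (n + 1) (ks (path_sign ind d p) (c (hd p))) (edge_labels m p) else 0"
    have "{p \<in> set (path_list crit n). last p = z} = crit_paths crit n z"
      by (auto simp: set_path_list crit_paths_def)
    then have "sum ?h (set (path_list crit n)) = path_sum F crit ind m d c z n"
      by (simp add: sum.inter_filter[symmetric] path_sum_def)
    then show ?thesis
      by (simp add: mt_pow_start_list comp_def sum_list_distinct_conv_sum_set distinct_path_list assms)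
  qed
  then show ?thesis unfolding twisted_def by simp
qed

lemma sum_square_eq_sum_diagonals:
  fixes g :: "nat \<Rightarrow> nat \<Rightarrow> 'a::comm_monoid_add"
  assumes "\<And>q k. K < q + k \<Longrightarrow> g q k = 0"
  shows "(\<Sum>k\<le>K. \<Sum>q\<le>K. g q k) = (\<Sum>n\<le>K. \<Sum>q\<le>n. g q (n - q))"
proof -
  have "(\<Sum>k\<le>K. \<Sum>q\<le>K. g q k) = (\<Sum>(q, k)\<in>{..K} \<times> {..K}. g q k)"
    by (subst sum.swap) (rule sum.cartesian_product)
  also have "\<dots> = (\<Sum>(q, k)\<in>{(q, k). q + k \<le> K}. g q k)"
    by (rule sum.mono_neutral_right) (auto intro!: assms)
  also have "\<dots> = (\<Sum>n\<le>K. \<Sum>q\<le>n. g q (n - q))"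
    by (rule sum.triangle_reindex_eq)
  finally show ?thesis .
qed

lemma sum_crit_paths_concat:
  "(\<Sum>R\<in>crit_paths crit k z. \<Sum>Q\<in>crit_paths crit q (hd R). h Q R) =
   (\<Sum>P\<in>crit_paths crit (q + k) z. h (take (Suc q) P) (drop q P))"
proof -
  have "(\<Sum>R\<in>crit_paths crit k z. \<Sum>Q\<in>crit_paths crit q (hd R). h Q R) =
      (\<Sum>(R, Q)\<in>(SIGMA R:crit_paths crit k z. crit_paths crit q (hd R)). h Q R)"
    by (rule sum.Sigma) (auto simp: finite_crit_paths)
  also have "\<dots> = (\<Sum>P\<in>crit_paths crit (q + k) z. h (take (Suc q) P) (drop q P))"
  proof (rule sum.reindex_bij_witness[where j = "\<lambda>(R, Q). Q @ tl R" and i = "\<lambda>P. (drop q P, take (Suc q) P)"])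
    fix a assume a: "a \<in> (SIGMA R:crit_paths crit k z. crit_paths crit q (hd R))"
    obtain R Q where a': "a = (R, Q)" by (cases a)
    have R: "length R = Suc k" "set R \<subseteq> set crit" "last R = z"
      and Q: "length Q = Suc q" "set Q \<subseteq> set crit" "last Q = hd R"
      using a a' by (auto simp: crit_paths_def)
    obtain x R' where R': "R = x # R'" using R(1) by (cases R) auto
    obtain Q' where Q': "Q = Q' @ [x]" using Q(1,3) R' by (cases Q rule: rev_cases) auto
    have dq: "drop q (Q @ tl R) = R" and tq: "take (Suc q) (Q @ tl R) = Q"
      using Q(1) R' Q' by auto
    then show "(\<lambda>P. (drop q P, take (Suc q) P)) ((\<lambda>(R, Q). Q @ tl R) a) = a"
      and "h (take (Suc q) ((\<lambda>(R, Q). Q @ tl R) a)) (drop q ((\<lambda>(R, Q). Q @ tl R) a)) =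
        (case a of (R, Q) \<Rightarrow> h Q R)"
      using a' by simp_all
    have "Q @ tl R = Q' @ R" using R' Q' by simp
    then show "(\<lambda>(R, Q). Q @ tl R) a \<in> crit_paths crit (q + k) z"
      using Q R R' Q' a' by (auto simp: crit_paths_def)
  next
    fix P assume P: "P \<in> crit_paths crit (q + k) z"
    then have l: "length P = Suc (q + k)" "set P \<subseteq> set crit" "last P = z"
      by (auto simp: crit_paths_def)
    show "(\<lambda>(R, Q). Q @ tl R) (drop q P, take (Suc q) P) = P"
      by (simp add: tl_drop) (metis append_take_drop_id drop_Suc)
    have "last (take (Suc q) P) = P ! q" using l(1) by (subst last_conv_nth) (auto simp: min_def)
    moreover have "hd (drop q P) = P ! q" using l(1) by (simp add: hd_drop_conv_nth)
    ultimately show "(drop q P, take (Suc q) P) \<in> (SIGMA R:crit_paths crit k z. crit_paths crit q (hd R))"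
      using l by (auto simp: crit_paths_def dest: in_set_takeD in_set_dropD)
  qed
  finally show ?thesis .
qed

lemma path_sign_split:
  assumes l: "length P = Suc (q + k)"
  shows "path_sign ind d' (drop q P) + path_sign ind d (take (Suc q) P)
    = path_sign ind d P + int (k * q) + int k * (d' - d)"
proof -
  define L where "L = drop q (butlast P)"
  have "butlast P = take q P @ L"
    unfolding L_def using l by (metis append_take_drop_id take_butlast lessI less_add_Suc1)
  moreover have "length L = k" "length (take q P) = q"
    unfolding L_def using l by simp_all
  moreover have "butlast (drop q P) = L" "butlast (take (Suc q) P) = take q P"
    unfolding L_def using l by (simp_all add: butlast_drop butlast_take)
  ultimately show ?thesis
    using vertex_signs_shift[of ind "d - int q" "d' - d + int q" L]
    by (simp add: path_sign_def vertex_signs_append algebra_simps)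
qed

lemma sum_crit_paths_concat_signed:
  "(\<Sum>R\<in>crit_paths crit k z. \<Sum>Q\<in>crit_paths crit q (hd R).
      ks (path_sign ind d' R + path_sign ind d Q) (H (hd Q) (edge_labels m Q) (edge_labels m R)))
    = (\<Sum>P\<in>crit_paths crit (q + k) z. ks (path_sign ind d P + int (k * q) + int k * (d' - d))
        (H (hd P) (take q (edge_labels m P)) (drop q (edge_labels m P))))"
  unfolding sum_crit_paths_concat
proof (intro sum.cong refl)
  fix P assume "P \<in> crit_paths crit (q + k) z"
  then have l: "length P = Suc (q + k)" by (simp add: crit_paths_def)
  then have "hd (take (Suc q) P) = hd P" by (cases P) auto
  with l show "ks (path_sign ind d' (drop q P) + path_sign ind d (take (Suc q) P))
      (H (hd (take (Suc q) P)) (edge_labels m (take (Suc q) P)) (edge_labels m (drop q P)))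
    = ks (path_sign ind d P + int (k * q) + int k * (d' - d))
      (H (hd P) (take q (edge_labels m P)) (drop q (edge_labels m P)))"
    by (simp add: edge_labels_take edge_labels_drop path_sign_split)
qed

lemma insert_vertex_crit_paths:
  assumes P: "P \<in> crit_paths crit n z" and y: "y \<in> set crit" and r: "r \<le> n"
  shows "take r P @ y # drop r P \<in> crit_paths crit (Suc n) z"
  using assms by (auto simp: crit_paths_def dest: in_set_takeD in_set_dropD)

lemma bij_betw_insert_vertex:
  assumes r: "r \<le> n"
  shows "bij_betw (\<lambda>(P, y). take r P @ y # drop r P)
    (crit_paths crit n z \<times> set crit) (crit_paths crit (Suc n) z)"
proof (rule bij_betw_byWitness[where f' = "\<lambda>P'. (take r P' @ drop (Suc r) P', P' ! r)"], safe)
  fix P y assume "P \<in> crit_paths crit n z" "y \<in> set crit"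
  then show "take r P @ y # drop r P \<in> crit_paths crit (Suc n) z"
    by (rule insert_vertex_crit_paths[OF _ _ r])
  have "length (take r P) = r" using \<open>P \<in> crit_paths crit n z\<close> r by (simp add: crit_paths_def)
  then show "take r (take r P @ y # drop r P) @ drop (Suc r) (take r P @ y # drop r P) = P"
    and "(take r P @ y # drop r P) ! r = y"
    by (simp_all add: nth_append)
next
  fix P' assume P': "P' \<in> crit_paths crit (Suc n) z"
  then have l: "length P' = Suc (Suc n)" and s: "set P' \<subseteq> set crit" and z: "last P' = z"
    by (simp_all add: crit_paths_def)
  have "length (take r P') = r" using l r by simp
  then show "take r (take r P' @ drop (Suc r) P') @ P' ! r # drop r (take r P' @ drop (Suc r) P') = P'"
    using l r by (simp add: id_take_nth_drop[symmetric])
  show "P' ! r \<in> set crit" using P' r by (auto intro: crit_paths_nth_mem)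
  show "take r P' @ drop (Suc r) P' \<in> crit_paths crit n z"
    using l s z r by (auto simp: crit_paths_def dest: in_set_takeD in_set_dropD)
qed

lemma hd_insert_vertex: "0 < r \<Longrightarrow> P \<noteq> [] \<Longrightarrow> hd (take r P @ y # drop r P) = hd P"
  by (cases P) auto

lemma edge_labels_insert_vertex:
  assumes l: "length P = Suc n" and r: "1 \<le> r" "r \<le> n"
  shows "edge_labels m (take r P @ y # drop r P) =
    take (r - 1) (edge_labels m P) @ m (P ! (r - 1)) y # m y (P ! r) # drop r (edge_labels m P)"
proof -
  have "take r P \<noteq> []" "drop r P \<noteq> []" using l r by auto
  moreover have "last (take r P) = P ! (r - 1)"
    using l r by (subst last_conv_nth) (auto simp: min_def)
  moreover have "hd (drop r P) = P ! r" using l r by (simp add: hd_drop_conv_nth)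
  moreover have "edge_labels m (take r P) = take (r - 1) (edge_labels m P)"
    using edge_labels_take[of "r - 1" P m] l r by simp
  ultimately show ?thesis
    by (simp add: edge_labels_append edge_labels_Cons edge_labels_drop)
qed

lemma path_sign_insert_vertex:
  assumes l: "length P = Suc n" and r: "r \<le> n"
  shows "path_sign ind d (take r P @ y # drop r P) = path_sign ind d P + d - ind y - int n"
proof -
  define L where "L = drop r (butlast P)"
  have "length L = n - r" "length (take r P) = r"
    unfolding L_def using l r by simp_all
  moreover have "butlast (take r P @ y # drop r P) = take r P @ y # L"
    unfolding L_def using l r by (simp add: butlast_append butlast_drop)
  moreover have "butlast P = take r P @ L"
    unfolding L_def using l r by (metis append_take_drop_id take_butlast le_imp_less_Suc)
  ultimately show ?thesis
    using vertex_signs_shift[of ind "d - int r - 1" 1 L] r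
    by (simp add: path_sign_def vertex_signs_append algebra_simps)
qed

lemma replace_mu_length:
  "1 \<le> r \<Longrightarrow> r + s \<le> Suc (length gs) \<Longrightarrow> length (replace_mu mu1 mu2 r s gs) = Suc (length gs) - s"
  unfolding replace_mu_def by simp

lemma replace_mu_mu1:
  "1 \<le> r \<Longrightarrow> r \<le> length gs \<Longrightarrow> replace_mu mu1 mu2 r 1 gs = gs[r - 1 := mu1 (gs ! (r - 1))]"
  unfolding replace_mu_def mu_def
  by (simp add: upd_conv_take_nth_drop hd_drop_conv_nth take_Suc_conv_app_nth)

lemma replace_mu_mu2:
  "length A = r - 1 \<Longrightarrow> 1 \<le> r \<Longrightarrow> replace_mu mu1 mu2 r 2 (A @ a # b # B) = A @ mu2 a b # B"
  unfolding replace_mu_def mu_def by simp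

lemma zero_in_replace_mu: "3 \<le> s \<Longrightarrow> 0 \<in> set (replace_mu mu1 mu2 r s gs)"
  unfolding replace_mu_def mu_def by simp

locale twisting_data =
  fixes GC :: "int \<Rightarrow> 'c::ab_group_add set" and mu1 :: "'c \<Rightarrow> 'c" and mu2 :: "'c \<Rightarrow> 'c \<Rightarrow> 'c"
    and crit :: "'x list" and ind :: "'x \<Rightarrow> int" and m :: "'x \<Rightarrow> 'x \<Rightarrow> 'c"
  assumes dga: "dga GC mu1 mu2" and cocycle: "twisting_cocycle GC mu1 mu2 crit ind m"
begin

lemma distinct_crit: "distinct crit"
  using cocycle unfolding twisting_cocycle_def by simp

lemma m_in_degree: "x \<in> set crit \<Longrightarrow> y \<in> set crit \<Longrightarrow> m x y \<in> GC (ind x - ind y - 1)"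
  using cocycle unfolding twisting_cocycle_def by simp

lemma m_eq_0_if_index_le:
  assumes "x \<in> set crit" "y \<in> set crit" "ind x \<le> ind y"
  shows "m x y = 0"
proof -
  have "ind x - ind y - 1 < 0" using assms(3) by simp
  then have "GC (ind x - ind y - 1) = {0}"
    using dga unfolding dga_def by blast
  then show ?thesis using m_in_degree[OF assms(1,2)] by simp
qed

definition index_count :: nat where
  "index_count = card (ind ` set crit)"

text \<open>Along a path with nonzero edge labels the index strictly decreases, so it visits
  at most \<open>index_count\<close> vertices.\<close>
lemma long_path_has_zero_edge:
  assumes p: "p \<in> crit_paths crit n z" and long: "index_count \<le> n"
  shows "0 \<in> set (edge_labels m p)"
proof (rule ccontr)
  assume nz: "0 \<notin> set (edge_labels m p)"
  have l: "length p = Suc n" using p by (simp add: crit_paths_def)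
  have step: "ind (p ! Suc j) < ind (p ! j)" if "j < n" for j
  proof -
    have "m (p ! j) (p ! Suc j) \<noteq> 0"
      using nz nth_mem[of j "edge_labels m p"] nth_edge_labels[of j p m] that l by auto
    then show ?thesis
      using m_eq_0_if_index_le crit_paths_nth_mem[OF p] that by (meson Suc_leI less_imp_le not_le)
  qed
  have decreasing: "ind (p ! j) < ind (p ! i)" if "i < j" "j \<le> n" for i j
    using that
  proof (induction j)
    case (Suc j)
    then show ?case using step[of j] by (cases "i = j") auto
  qed simp
  have "inj_on (\<lambda>j. ind (p ! j)) {..n}"
    by (rule inj_onI) (metis atMost_iff decreasing less_irrefl linorder_neqE_nat)
  moreover have "(\<lambda>j. ind (p ! j)) ` {..n} \<subseteq> ind ` set crit"
    using crit_paths_nth_mem[OF p] by auto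
  ultimately have "Suc n \<le> index_count"
    unfolding index_count_def by (metis card_atMost card_image card_mono finite_imageI finite_set)
  then show False using long by simp
qed

lemma path_sum_vanishes:
  assumes "multilinear_op F" "index_count \<le> n"
  shows "path_sum F crit ind m d c z n = 0"
  unfolding path_sum_def
proof (rule sum.neutral, rule ballI)
  fix p assume p: "p \<in> crit_paths crit n z"
  have "length (edge_labels m p) = n" using p by (simp add: crit_paths_def)
  then show "F (Suc n) (ks (path_sign ind d p) (c (hd p))) (edge_labels m p) = 0"
    by (rule multilinear_op.zero_slot[OF assms(1) _ long_path_has_zero_edge[OF p assms(2)]])
qed

lemma twisted_eq_sum_path_sum:
  assumes "multilinear_op F" "index_count \<le> K"
  shows "twisted F crit ind m d c z = (\<Sum>n\<le>K. path_sum F crit ind m d c z n)"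
proof -
  have support: "{n. path_sum F crit ind m d c z n \<noteq> 0} \<subseteq> {..K}"
  proof
    fix n assume "n \<in> {n. path_sum F crit ind m d c z n \<noteq> 0}"
    then show "n \<in> {..K}"
      using path_sum_vanishes[OF assms(1), of n] assms(2) by (cases "n \<le> K") auto
  qed
  show ?thesis
    unfolding twisted_eq_fsum_path_sum[OF distinct_crit] fsum_def
    by (rule sum.mono_neutral_left[OF finite_atMost support]) auto
qed

lemma composite_vanishes_on_long_path:
  assumes F1: "multilinear_op F1" and F2: "multilinear_op F2"
    and P: "P \<in> crit_paths crit (q + k) z" and long: "index_count \<le> q + k"
  shows "F1 (Suc k) (F2 (Suc q) a (take q (edge_labels m P))) (drop q (edge_labels m P)) = 0"
proof -
  have "length (edge_labels m P) = q + k" using P by (simp add: crit_paths_def)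
  then have lt: "length (take q (edge_labels m P)) = q" and ld: "length (drop q (edge_labels m P)) = k"
    by auto
  have "0 \<in> set (take q (edge_labels m P)) \<or> 0 \<in> set (drop q (edge_labels m P))"
    using long_path_has_zero_edge[OF P long] by (metis Un_iff append_take_drop_id set_append)
  then show ?thesis
  proof
    assume "0 \<in> set (take q (edge_labels m P))"
    then show ?thesis
      by (simp add: multilinear_op.zero_slot[OF F2 lt] multilinear_op.arg_zero[OF F1 ld])
  next
    assume "0 \<in> set (drop q (edge_labels m P))"
    then show ?thesis by (rule multilinear_op.zero_slot[OF F1 ld])
  qed
qed

lemma twisted_twisted_eq:
  assumes F1: "multilinear_op F1" and F2: "multilinear_op F2"
  shows "twisted F1 crit ind m d' (twisted F2 crit ind m d c) z =
    (\<Sum>n\<le>index_count. \<Sum>P\<in>crit_paths crit n z. ks (path_sign ind d P)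
      (\<Sum>q\<le>n. ks (int ((n - q) * q) + int (n - q) * (d' - d))
        (F1 (Suc (n - q)) (F2 (Suc q) (c (hd P)) (take q (edge_labels m P))) (drop q (edge_labels m P)))))"
proof -
  define K where "K = index_count"
  define G where "G q k P = ks (path_sign ind d P + int (k * q) + int k * (d' - d))
    (F1 (Suc k) (F2 (Suc q) (c (hd P)) (take q (edge_labels m P))) (drop q (edge_labels m P)))"
    for q k P
  define g where "g q k = (\<Sum>P\<in>crit_paths crit (q + k) z. G q k P)" for q k
  have inner: "twisted F2 crit ind m d c y =
      (\<Sum>q\<le>K. \<Sum>Q\<in>crit_paths crit q y. ks (path_sign ind d Q) (F2 (Suc q) (c (hd Q)) (edge_labels m Q)))"
    for y
    unfolding twisted_eq_sum_path_sum[OF F2 order_refl] K_def path_sum_def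
    by (intro sum.cong refl) (auto simp: crit_paths_def intro!: multilinear_op.arg_ks[OF F2])
  have concat: "(\<Sum>R\<in>crit_paths crit k z. \<Sum>Q\<in>crit_paths crit q (hd R).
      ks (path_sign ind d' R + path_sign ind d Q)
        (F1 (Suc k) (F2 (Suc q) (c (hd Q)) (edge_labels m Q)) (edge_labels m R))) = g q k" for q k
    unfolding g_def G_def
    by (rule sum_crit_paths_concat_signed[where H = "\<lambda>a gs hs. F1 (Suc k) (F2 (Suc q) (c a) gs) hs"])
  have "twisted F1 crit ind m d' (twisted F2 crit ind m d c) z =
      (\<Sum>k\<le>K. \<Sum>R\<in>crit_paths crit k z.
        F1 (Suc k) (ks (path_sign ind d' R) (twisted F2 crit ind m d c (hd R))) (edge_labels m R))"
    unfolding twisted_eq_sum_path_sum[OF F1 order_refl] K_def path_sum_def ..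
  also have "\<dots> = (\<Sum>k\<le>K. \<Sum>R\<in>crit_paths crit k z. \<Sum>q\<le>K. \<Sum>Q\<in>crit_paths crit q (hd R).
      ks (path_sign ind d' R + path_sign ind d Q)
        (F1 (Suc k) (F2 (Suc q) (c (hd Q)) (edge_labels m Q)) (edge_labels m R)))"
    by (intro sum.cong refl)
      (simp add: inner crit_paths_def ks_sum multilinear_op.arg_ks[OF F1] multilinear_op.arg_sum[OF F1])
  also have "\<dots> = (\<Sum>k\<le>K. \<Sum>q\<le>K. g q k)"
    by (subst sum.swap) (simp add: concat)
  also have "\<dots> = (\<Sum>n\<le>K. \<Sum>q\<le>n. g q (n - q))"
  proof (rule sum_square_eq_sum_diagonals)
    fix q k assume "K < q + k"
    then show "g q k = 0"
      unfolding g_def G_def K_def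
      using composite_vanishes_on_long_path[OF F1 F2] by (simp add: sum.neutral)
  qed
  also have "\<dots> = (\<Sum>n\<le>K. \<Sum>P\<in>crit_paths crit n z. \<Sum>q\<le>n. G q (n - q) P)"
    unfolding g_def by (intro sum.cong refl) (simp add: sum.swap[of _ "{.._}"])
  finally show ?thesis
    unfolding G_def K_def by (simp add: ks_sum add.assoc)
qed

lemma hom_list_edge_labels:
  "set P \<subseteq> set crit \<Longrightarrow> hom_list GC (edge_labels m P) (edge_labels (\<lambda>x y. ind x - ind y - 1) P)"
  unfolding hom_list_def by (auto simp: nth_edge_labels intro!: m_in_degree)

lemma mu1_m_eq:
  "x \<in> set crit \<Longrightarrow> y \<in> set crit \<Longrightarrow>
    mu1 (m x y) = (\<Sum>w\<in>set crit. ks (ind x - ind w) (mu2 (m x w) (m w y)))"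
  using cocycle distinct_crit unfolding twisting_cocycle_def by (simp add: sum_list_distinct_conv_sum_set)

lemma mu1_zero: "mu1 0 = 0"
  using dga unfolding dga_def by (metis add_0 add_left_imp_eq)

end

locale twisted_morphism = twisting_data GC mu1 mu2 crit ind m
  for GC :: "int \<Rightarrow> 'c::ab_group_add set" and mu1 mu2 crit and ind :: "'x \<Rightarrow> int" and m +
  fixes GA :: "int \<Rightarrow> 'a::ab_group_add set" and nuA :: "nat \<Rightarrow> 'a \<Rightarrow> 'c list \<Rightarrow> 'a"
    and GB :: "int \<Rightarrow> 'b::ab_group_add set" and nuB :: "nat \<Rightarrow> 'b \<Rightarrow> 'c list \<Rightarrow> 'b"
    and phi :: "nat \<Rightarrow> 'a \<Rightarrow> 'c list \<Rightarrow> 'b" and d :: int and c :: "'x \<Rightarrow> 'a"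
  assumes module_A: "ainf_module GC mu1 mu2 GA nuA"
    and module_B: "ainf_module GC mu1 mu2 GB nuB"
    and morphism: "ainf_morphism GC mu1 mu2 GA nuA GB nuB phi"
    and c_degree: "\<forall>x\<in>set crit. c x \<in> GA (d - ind x)"
begin

lemmas multilinear_nuA = ainf_module_multilinear[OF module_A]
  and multilinear_nuB = ainf_module_multilinear[OF module_B]
  and multilinear_phi = ainf_morphism_multilinear[OF morphism]

text \<open>The \<open>(r, s)\<close> summand \<open>\<phi>(1\<^sup>r \<otimes> \<mu>\<^sub>s \<otimes> 1\<^sup>t)\<close> of the morphism equation, evaluated on
  \<open>c (hd P)\<close> followed by the edge labels of \<open>P\<close>.\<close>
definition mu_term :: "'x list \<Rightarrow> nat \<Rightarrow> nat \<Rightarrow> 'b" where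
  "mu_term P r s = ks (int (r + s * (length P - r - s)))
     (ks ((int s - 2) * ((d - ind (hd P)) + sum_list (take (r - 1) (edge_labels (\<lambda>x y. ind x - ind y - 1) P))))
       (phi (length P - s + 1) (c (hd P)) (replace_mu mu1 mu2 r s (edge_labels m P))))"

lemma morphism_along_path:
  assumes P: "P \<in> crit_paths crit n z"
  shows "(\<Sum>q\<le>n. ks (int ((n - q) * q))
      (nuB (Suc (n - q)) (phi (Suc q) (c (hd P)) (take q (edge_labels m P))) (drop q (edge_labels m P))))
    = (\<Sum>q\<le>n. ks (int ((n - q) * q) + int (n - q))
      (phi (Suc (n - q)) (nuA (Suc q) (c (hd P)) (take q (edge_labels m P))) (drop q (edge_labels m P))))
    + (\<Sum>r\<in>{1..Suc n}. \<Sum>s\<in>{1..Suc n - r}. mu_term P r s)"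
proof -
  have l: "length P = Suc n" and s: "set P \<subseteq> set crit" using P by (auto simp: crit_paths_def)
  have "hd P \<in> set crit" using l s by (cases P) auto
  then have "c (hd P) \<in> GA (d - ind (hd P))" using c_degree by blast
  from morphism[unfolded ainf_morphism_def, THEN conjunct2, THEN conjunct2, THEN conjunct2,
      rule_format, of "Suc n", OF _ this hom_list_edge_labels[OF s]]
  have relation: "(\<Sum>s\<in>{Suc 0..Suc n}. ks (int (s * (Suc n - s)))
         (phi (Suc n - s + 1) (nuA s (c (hd P)) (take (s - 1) (edge_labels m P))) (drop (s - 1) (edge_labels m P))))
      + (\<Sum>r\<in>{1..Suc n}. \<Sum>s\<in>{1..Suc n - r}. mu_term P r s)
      = (\<Sum>s\<in>{Suc 0..Suc n}. ks (int ((s + 1) * (Suc n - s)))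
         (nuB (Suc n - s + 1) (phi s (c (hd P)) (take (s - 1) (edge_labels m P))) (drop (s - 1) (edge_labels m P))))"
    using l unfolding mu_term_def by simp
  have phi_sign: "ks (int (Suc q * k)) x = ks (int (k * q) + int k) x" for q k :: nat and x :: 'b
    by (simp add: algebra_simps)
  have nuB_sign: "ks (int (k * Suc q) + int k) x = ks (int (k * q)) x" for q k :: nat and x :: 'b
    by (rule ks_cong_even) (simp add: algebra_simps)
  show ?thesis
    using relation
    unfolding sum.atLeast1_atMost_eq lessThan_Suc_atMost diff_Suc_Suc diff_Suc_1
      Suc_eq_plus1[symmetric] phi_sign nuB_sign
    by (rule sym)
qed

lemma mu_term_vanishes:
  assumes l: "length P = Suc n" and "1 \<le> r" "3 \<le> s" "r + s \<le> Suc n"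
  shows "mu_term P r s = 0"
proof -
  have "length (replace_mu mu1 mu2 r s (edge_labels m P)) = Suc n - s"
    using replace_mu_length[of r s "edge_labels m P"] assms by simp
  then have "phi (Suc (Suc n - s)) (c (hd P)) (replace_mu mu1 mu2 r s (edge_labels m P)) = 0"
    using multilinear_op.zero_slot[OF multilinear_phi] zero_in_replace_mu[OF assms(3)] by blast
  moreover have "length P - s + 1 = Suc (Suc n - s)" using l by simp
  ultimately show ?thesis unfolding mu_term_def by simp
qed

lemma sum_mu_terms_eq:
  assumes l: "length P = Suc n"
  shows "(\<Sum>r\<in>{1..Suc n}. \<Sum>s\<in>{1..Suc n - r}. mu_term P r s)
    = (\<Sum>r\<in>{1..n}. mu_term P r 1) + (\<Sum>r\<in>{1..n - 1}. mu_term P r 2)"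
proof -
  have inner: "(\<Sum>s\<in>{1..Suc n - r}. mu_term P r s)
      = (if 1 \<le> Suc n - r then mu_term P r 1 else 0) + (if 2 \<le> Suc n - r then mu_term P r 2 else 0)"
    if r: "r \<in> {1..Suc n}" for r
  proof -
    have "(\<Sum>s\<in>{1..Suc n - r}. mu_term P r s)
        = (\<Sum>s\<in>{1..Suc n - r}. (if s = 1 then mu_term P r 1 else 0) + (if s = 2 then mu_term P r 2 else 0))"
      using mu_term_vanishes[OF l, of r] r by (intro sum.cong refl) auto
    then show ?thesis by (simp add: sum.distrib)
  qed
  have "(\<Sum>r\<in>{1..Suc n}. if 1 \<le> Suc n - r then mu_term P r 1 else 0) = (\<Sum>r\<in>{1..n}. mu_term P r 1)"
    and "(\<Sum>r\<in>{1..Suc n}. if 2 \<le> Suc n - r then mu_term P r 2 else 0) = (\<Sum>r\<in>{1..n - 1}. mu_term P r 2)"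
    by (simp_all add: sum.inter_filter[symmetric]) (rule sum.cong, auto)+
  with inner show ?thesis by (simp add: sum.distrib)
qed

lemma mu_term_mu1:
  assumes P: "P \<in> crit_paths crit n z" and r: "1 \<le> r" "r \<le> n"
  shows "mu_term P r 1 = (\<Sum>y\<in>set crit. ks (int n + d + int r + 1 + ind y)
      (phi (Suc n) (c (hd P)) ((edge_labels m P)[r - 1 := mu2 (m (P ! (r - 1)) y) (m y (P ! r))])))"
proof -
  let ?x = "P ! (r - 1)"
  let ?X = "\<lambda>y. phi (Suc n) (c (hd P)) ((edge_labels m P)[r - 1 := mu2 (m ?x y) (m y (P ! r))])"
  have l: "length P = Suc n" using P by (simp add: crit_paths_def)
  have lg: "length (edge_labels m P) = n" and i: "r - 1 < n" using l r by simp_all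
  have x: "?x \<in> set crit" "P ! r \<in> set crit" using P r by (auto intro: crit_paths_nth_mem)
  have label: "edge_labels m P ! (r - 1) = m ?x (P ! r)"
    using nth_edge_labels[of "r - 1" P m] l r by simp
  have degrees: "sum_list (take (r - 1) (edge_labels (\<lambda>x y. ind x - ind y - 1) P))
      = ind (hd P) - ind ?x - int (r - 1)"
    using sum_take_edge_degrees[of "r - 1" P ind] l r by simp
  have "mu_term P r 1 = ks (int n - d + ind ?x + int (r - 1))
      (phi (Suc n) (c (hd P)) ((edge_labels m P)[r - 1 := mu1 (m ?x (P ! r))]))"
    unfolding mu_term_def degrees replace_mu_mu1[OF r(1) r(2)[folded lg]] label
    using l r by (simp add: algebra_simps)
  also have "\<dots> = (\<Sum>y\<in>set crit.
      ks (int n - d + ind ?x + int (r - 1) + (ind ?x - ind y)) (?X y))"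
    unfolding mu1_m_eq[OF x] multilinear_op.slot_sum[OF multilinear_phi lg i]
      multilinear_op.slot_ks[OF multilinear_phi lg i]
    by (simp add: ks_sum)
  also have "\<dots> = (\<Sum>y\<in>set crit. ks (int n + d + int r + 1 + ind y) (?X y))"
    using r by (intro sum.cong refl ks_cong_even) presburger
  finally show ?thesis .
qed

lemma mu_term_mu2:
  assumes l: "length P = Suc (Suc n)" and r: "r \<le> n"
  shows "mu_term P r 2 = ks (int r) (phi (Suc n) (c (hd P)) (replace_mu mu1 mu2 r 2 (edge_labels m P)))"
proof -
  have "even (int (r + 2 * (n - r)) - int r)" by simp
  then show ?thesis unfolding mu_term_def l by (simp add: ks_cong_even)
qed

lemma mu_term_mu2_insert_vertex:
  assumes P: "P \<in> crit_paths crit n z" and r: "1 \<le> r" "r \<le> n"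
  shows "ks (path_sign ind d (take r P @ y # drop r P)) (mu_term (take r P @ y # drop r P) r 2)
    = - ks (path_sign ind d P + (int n + d + int r + 1 + ind y))
        (phi (Suc n) (c (hd P)) ((edge_labels m P)[r - 1 := mu2 (m (P ! (r - 1)) y) (m y (P ! r))]))"
proof -
  have l: "length P = Suc n" using P by (simp add: crit_paths_def)
  then have "hd (take r P @ y # drop r P) = hd P"
    using r by (intro hd_insert_vertex) auto
  then have labels: "phi (Suc n) (c (hd (take r P @ y # drop r P)))
      (replace_mu mu1 mu2 r 2 (edge_labels m (take r P @ y # drop r P)))
    = phi (Suc n) (c (hd P)) ((edge_labels m P)[r - 1 := mu2 (m (P ! (r - 1)) y) (m y (P ! r))])"
    using l r by (simp add: edge_labels_insert_vertex replace_mu_mu2 upd_conv_take_nth_drop)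
  have parity: "odd (path_sign ind d P + (int n + d + int r + 1 + ind y)
      - (path_sign ind d (take r P @ y # drop r P) + int r))"
    unfolding path_sign_insert_vertex[OF l r(2)] by presburger
  show ?thesis
    using l r labels by (simp add: mu_term_mu2 ks_cong_odd[OF parity])
qed

text \<open>Inserting the vertex \<open>y\<close> at position \<open>r\<close> turns the \<open>y\<close>-summand of the twisting cocycle
  equation for the \<open>r\<close>-th edge into a \<open>\<mu>\<^sub>2\<close>-term of a path one edge longer, with the opposite
  sign.\<close>
lemma mu1_terms_cancel_mu2_terms:
  assumes r: "1 \<le> r" "r \<le> n"
  shows "(\<Sum>P\<in>crit_paths crit n z. ks (path_sign ind d P) (mu_term P r 1))
    + (\<Sum>P\<in>crit_paths crit (Suc n) z. ks (path_sign ind d P) (mu_term P r 2)) = 0"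
proof -
  have "(\<Sum>P\<in>crit_paths crit n z. ks (path_sign ind d P) (mu_term P r 1))
      = (\<Sum>(P, y)\<in>crit_paths crit n z \<times> set crit. ks (path_sign ind d P + (int n + d + int r + 1 + ind y))
          (phi (Suc n) (c (hd P)) ((edge_labels m P)[r - 1 := mu2 (m (P ! (r - 1)) y) (m y (P ! r))])))"
    unfolding sum.cartesian_product[symmetric]
  proof (intro sum.cong refl)
    fix P assume P: "P \<in> crit_paths crit n z"
    show "ks (path_sign ind d P) (mu_term P r 1) = (\<Sum>y\<in>set crit.
        ks (path_sign ind d P + (int n + d + int r + 1 + ind y))
          (phi (Suc n) (c (hd P)) ((edge_labels m P)[r - 1 := mu2 (m (P ! (r - 1)) y) (m y (P ! r))])))"
      unfolding mu_term_mu1[OF P r] by (simp add: ks_sum)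
  qed
  also have "\<dots> = (\<Sum>(P, y)\<in>crit_paths crit n z \<times> set crit.
      - ks (path_sign ind d (take r P @ y # drop r P)) (mu_term (take r P @ y # drop r P) r 2))"
    by (intro sum.cong refl) (auto simp: mu_term_mu2_insert_vertex[OF _ r])
  also have "\<dots> = - (\<Sum>P\<in>crit_paths crit (Suc n) z. ks (path_sign ind d P) (mu_term P r 2))"
    using sum.reindex_bij_betw[OF bij_betw_insert_vertex[OF r(2)],
        of "\<lambda>P. ks (path_sign ind d P) (mu_term P r 2)"]
    by (simp add: case_prod_unfold sum_negf)
  finally show ?thesis by simp
qed

definition mu1_terms :: "'x \<Rightarrow> nat \<Rightarrow> 'b" where
  "mu1_terms z n = (\<Sum>P\<in>crit_paths crit n z. ks (path_sign ind d P) (\<Sum>r\<in>{1..n}. mu_term P r 1))"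

definition mu2_terms :: "'x \<Rightarrow> nat \<Rightarrow> 'b" where
  "mu2_terms z n = (\<Sum>P\<in>crit_paths crit n z. ks (path_sign ind d P) (\<Sum>r\<in>{1..n - 1}. mu_term P r 2))"

lemma mu1_terms_add_mu2_terms_Suc: "mu1_terms z n + mu2_terms z (Suc n) = 0"
proof -
  have mu1: "mu1_terms z n = (\<Sum>r\<in>{1..n}. \<Sum>P\<in>crit_paths crit n z. ks (path_sign ind d P) (mu_term P r 1))"
    unfolding mu1_terms_def ks_sum by (rule sum.swap)
  have mu2: "mu2_terms z (Suc n)
      = (\<Sum>r\<in>{1..n}. \<Sum>P\<in>crit_paths crit (Suc n) z. ks (path_sign ind d P) (mu_term P r 2))"
    unfolding mu2_terms_def ks_sum diff_Suc_1 by (rule sum.swap)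
  show ?thesis
    unfolding mu1 mu2 sum.distrib[symmetric]
    by (intro sum.neutral ballI mu1_terms_cancel_mu2_terms) auto
qed

lemma mu1_terms_vanish:
  assumes "index_count \<le> n"
  shows "mu1_terms z n = 0"
  unfolding mu1_terms_def
proof (intro sum.neutral ballI)
  fix P assume P: "P \<in> crit_paths crit n z"
  have lg: "length (edge_labels m P) = n" using P by (simp add: crit_paths_def)
  have "mu_term P r 1 = 0" if r: "r \<in> {1..n}" for r
  proof -
    let ?L = "(edge_labels m P)[r - 1 := mu1 (edge_labels m P ! (r - 1))]"
    have "0 \<in> set (edge_labels m P)" by (rule long_path_has_zero_edge[OF P assms])
    then have "0 \<in> set ?L"
      using lg r mu1_zero by (auto simp: in_set_conv_nth nth_list_update)
    then have "phi (Suc n) (c (hd P)) ?L = 0"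
      using lg by (intro multilinear_op.zero_slot[OF multilinear_phi]) simp_all
    moreover have "replace_mu mu1 mu2 r 1 (edge_labels m P) = ?L"
      using r lg by (intro replace_mu_mu1) auto
    moreover have "length P = Suc n" using P by (simp add: crit_paths_def)
    ultimately show ?thesis unfolding mu_term_def by simp
  qed
  then show "ks (path_sign ind d P) (\<Sum>r\<in>{1..n}. mu_term P r 1) = 0" by simp
qed

lemma mu_terms_sum_to_zero:
  "(\<Sum>n\<le>index_count. \<Sum>P\<in>crit_paths crit n z.
      ks (path_sign ind d P) (\<Sum>r\<in>{1..Suc n}. \<Sum>s\<in>{1..Suc n - r}. mu_term P r s)) = 0"
proof -
  have "(\<Sum>n\<le>index_count. \<Sum>P\<in>crit_paths crit n z.
      ks (path_sign ind d P) (\<Sum>r\<in>{1..Suc n}. \<Sum>s\<in>{1..Suc n - r}. mu_term P r s))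
      = (\<Sum>n\<le>index_count. mu1_terms z n + mu2_terms z n)"
    unfolding mu1_terms_def mu2_terms_def sum.distrib[symmetric]
  proof (intro sum.cong refl)
    fix n P assume "P \<in> crit_paths crit n z"
    then have "length P = Suc n" by (simp add: crit_paths_def)
    then show "ks (path_sign ind d P) (\<Sum>r\<in>{1..Suc n}. \<Sum>s\<in>{1..Suc n - r}. mu_term P r s)
        = ks (path_sign ind d P) (\<Sum>r\<in>{1..n}. mu_term P r 1)
          + ks (path_sign ind d P) (\<Sum>r\<in>{1..n - 1}. mu_term P r 2)"
      by (simp only: sum_mu_terms_eq ks_add)
  qed
  also have "\<dots> = (\<Sum>n\<le>index_count. mu2_terms z n - mu2_terms z (Suc n))"
    using mu1_terms_add_mu2_terms_Suc by (simp add: eq_neg_iff_add_eq_0[symmetric])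
  also have "\<dots> = mu2_terms z 0 - mu2_terms z (Suc index_count)"
    by (rule sum_telescope)
  also have "\<dots> = mu1_terms z index_count"
  proof -
    have "mu2_terms z 0 = 0" unfolding mu2_terms_def by simp
    moreover have "- mu2_terms z (Suc index_count) = mu1_terms z index_count"
      using mu1_terms_add_mu2_terms_Suc[of z index_count] by (simp add: add.commute minus_unique)
    ultimately show ?thesis by simp
  qed
  finally show ?thesis by (simp add: mu1_terms_vanish)
qed

theorem twisted_commutes:
  "twisted nuB crit ind m d (twisted phi crit ind m d c)
    = twisted phi crit ind m (d - 1) (twisted nuA crit ind m d c)"
proof
  fix z
  have sign: "ks (int ((n - q) * q) + int (n - q) * (d - 1 - d)) x = ks (int ((n - q) * q) + int (n - q)) x"
    for n q and x :: 'b
    by (rule ks_cong_even) simp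
  have "twisted nuB crit ind m d (twisted phi crit ind m d c) z
      = (\<Sum>n\<le>index_count. \<Sum>P\<in>crit_paths crit n z. ks (path_sign ind d P)
          (\<Sum>q\<le>n. ks (int ((n - q) * q)) (nuB (Suc (n - q))
            (phi (Suc q) (c (hd P)) (take q (edge_labels m P))) (drop q (edge_labels m P)))))"
    by (simp add: twisted_twisted_eq[OF multilinear_nuB multilinear_phi])
  also have "\<dots> = (\<Sum>n\<le>index_count. \<Sum>P\<in>crit_paths crit n z. ks (path_sign ind d P)
          (\<Sum>q\<le>n. ks (int ((n - q) * q) + int (n - q)) (phi (Suc (n - q))
            (nuA (Suc q) (c (hd P)) (take q (edge_labels m P))) (drop q (edge_labels m P)))))
      + (\<Sum>n\<le>index_count. \<Sum>P\<in>crit_paths crit n z.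
          ks (path_sign ind d P) (\<Sum>r\<in>{1..Suc n}. \<Sum>s\<in>{1..Suc n - r}. mu_term P r s))"
    unfolding sum.distrib[symmetric] ks_add[symmetric]
    by (intro sum.cong refl) (simp only: morphism_along_path)
  also have "\<dots> = twisted phi crit ind m (d - 1) (twisted nuA crit ind m d c) z"
    unfolding mu_terms_sum_to_zero twisted_twisted_eq[OF multilinear_phi multilinear_nuA] sign
    by simp
  finally show "twisted nuB crit ind m d (twisted phi crit ind m d c) z
      = twisted phi crit ind m (d - 1) (twisted nuA crit ind m d c) z" .
qed

end

theorem propositionB:
  fixes GC :: "int \<Rightarrow> 'c::ab_group_add set"
    and mu1 :: "'c \<Rightarrow> 'c" and mu2 :: "'c \<Rightarrow> 'c \<Rightarrow> 'c"
    and crit :: "'x list" and ind :: "'x \<Rightarrow> int" and m :: "'x \<Rightarrow> 'x \<Rightarrow> 'c"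
    and GA :: "int \<Rightarrow> 'a::ab_group_add set" and nuA :: "nat \<Rightarrow> 'a \<Rightarrow> 'c list \<Rightarrow> 'a"
    and GB :: "int \<Rightarrow> 'b::ab_group_add set" and nuB :: "nat \<Rightarrow> 'b \<Rightarrow> 'c list \<Rightarrow> 'b"
    and phi :: "nat \<Rightarrow> 'a \<Rightarrow> 'c list \<Rightarrow> 'b"
    and d :: int and c :: "'x \<Rightarrow> 'a"
  assumes "dga GC mu1 mu2"
    and "twisting_cocycle GC mu1 mu2 crit ind m"
    and "ainf_module GC mu1 mu2 GA nuA"
    and "ainf_module GC mu1 mu2 GB nuB"
    and "ainf_morphism GC mu1 mu2 GA nuA GB nuB phi"
    and "\<forall>x\<in>set crit. c x \<in> GA (d - ind x)"
  shows "twisted nuB crit ind m d (twisted phi crit ind m d c)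
       = twisted phi crit ind m (d - 1) (twisted nuA crit ind m d c)"
proof -
  interpret twisted_morphism GC mu1 mu2 crit ind m GA nuA GB nuB phi d c
    using assms by unfold_locales
  show ?thesis by (rule twisted_commutes)
qed

end
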